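(* Let $n\ge1$ be an integer and let $\underline\psi_1,\dots,\underline\psi_n\in[0,1]$ satisfy $\underline\psi_n\le n/(n+1)$ and \[ \frac{\underline\psi_j}{j}\le\frac{\underline\psi_{j+1}}{j+1}\quad\text{and}\quad \frac{1-\underline\psi_j}{n+1-j}\le\frac{1-\underline\psi_{j+1}}{n-j}\qquad(1\le j\le n-1). \] Then there exists a finite non-empty subset $E$ of $\bar\Delta^{(n+1)}$ such that $\underline\psi_j=\min\psi_j(E)$ for each $j=1,\dots,n$.
   Context: $\bar\Delta^{(n+1)}=\{(a_1,\dots,a_{n+1})\in\mathbb{R}^{n+1}: 0\le a_1\le\cdots\le a_{n+1},\ a_1+\cdots+a_{n+1}=1\}$; for $j=1,\dots,n+1$, $\psi_j\colon\bar\Delta^{(n+1)}\to\mathbb{R}$ is $\psi_j(a_1,\dots,a_{n+1})=a_1+\cdots+a_j$. *)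

theory Defs
  imports Complex_Main
begin

text \<open>Points of R^(n+1) are represented as functions nat => real with coordinates
  a 1, ..., a (n+1); coordinates outside {1..n+1} are fixed to 0 so that each point
  of R^(n+1) has a unique representative.\<close>

definition ordered_simplex :: "nat \<Rightarrow> (nat \<Rightarrow> real) set" where
  "ordered_simplex m = {a. (\<forall>i. i \<notin> {1..m} \<longrightarrow> a i = 0)
      \<and> 0 \<le> a 1
      \<and> (\<forall>i\<in>{1..<m}. a i \<le> a (Suc i))
      \<and> (\<Sum>i=1..m. a i) = 1}"

definition psi :: "nat \<Rightarrow> (nat \<Rightarrow> real) \<Rightarrow> real" where
  "psi j a = (\<Sum>i=1..j. a i)"

end

theory Submission
  imports Defs
begin

text \<open>
  Given the prescribed minima L 1, ..., L n, we realise each of them by its own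
  point of the ordered simplex and take E to be the set of these n points.  The k-th point
  is a "two-level" point: its first k coordinates equal the slope L k / k, and its remaining
  n + 1 - k coordinates equal the coslope (1 - L k) / (n + 1 - k).  Then psi k of the k-th
  point is exactly L k, and it lies in the ordered simplex because slope <= coslope (this is
  where the hypothesis L n <= n / (n + 1) enters).  The two chains of hypotheses say that
  slopes and coslopes increase with k; this makes psi j of the k-th point at least L j for
  every j, via the slopes when j <= k and via the coslopes when j > k.
\<close>

definition two_level_point :: "nat \<Rightarrow> nat \<Rightarrow> real \<Rightarrow> real \<Rightarrow> nat \<Rightarrow> real" where
  "two_level_point m k x c = (\<lambda>i. if 1 \<le> i \<and> i \<le> k then x
                                    else if k < i \<and> i \<le> m then c else 0)"

lemma psi_two_level_point:
  assumes "j \<le> m"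
  shows "psi j (two_level_point m k x c)
           = (if j \<le> k then real j * x else real k * x + real (j - k) * c)"
proof (cases "j \<le> k")
  case True
  have "psi j (two_level_point m k x c) = (\<Sum>i=1..j. x)"
    unfolding psi_def using True by (intro sum.cong) (auto simp: two_level_point_def)
  then show ?thesis using True by simp
next
  case False
  have split: "{1..j} = {1..k} \<union> {k+1..j}" using False by auto
  have "psi j (two_level_point m k x c)
          = (\<Sum>i=1..k. two_level_point m k x c i) + (\<Sum>i=k+1..j. two_level_point m k x c i)"
    unfolding psi_def split by (rule sum.union_disjoint) auto
  also have "\<dots> = (\<Sum>i=1..k. x) + (\<Sum>i=k+1..j. c)"
    using assms by (intro arg_cong2[where f = "(+)"] sum.cong) (auto simp: two_level_point_def)
  finally show ?thesis using False by simp
qed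

lemma two_level_point_in_ordered_simplex:
  assumes "k \<le> m" "0 \<le> x" "x \<le> c" "real k * x + real (m - k) * c = 1"
  shows "two_level_point m k x c \<in> ordered_simplex m"
proof -
  have "psi m (two_level_point m k x c) = 1"
    using assms psi_two_level_point[of m m k x c] by (cases "k = m") auto
  then show ?thesis
    using assms unfolding ordered_simplex_def psi_def by (auto simp: two_level_point_def)
qed

locale admissible_profile =
  fixes n :: nat and L :: "nat \<Rightarrow> real"
  assumes n_pos: "n \<ge> 1"
    and L_range: "\<forall>j\<in>{1..n}. 0 \<le> L j \<and> L j \<le> 1"
    and L_last: "L n \<le> real n / real (n + 1)"
    and L_steps: "\<forall>j\<in>{1..n-1}. L j / real j \<le> L (j + 1) / real (j + 1)
                    \<and> (1 - L j) / real (n + 1 - j) \<le> (1 - L (j + 1)) / real (n - j)"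
begin

definition slope :: "nat \<Rightarrow> real" where
  "slope k = L k / real k"

definition coslope :: "nat \<Rightarrow> real" where
  "coslope k = (1 - L k) / real (n + 1 - k)"

lemma L_eq_slope: "k \<in> {1..n} \<Longrightarrow> L k = real k * slope k"
  by (auto simp: slope_def)

lemma L_eq_coslope: "k \<in> {1..n} \<Longrightarrow> 1 - L k = real (n + 1 - k) * coslope k"
  by (auto simp: coslope_def)

lemma slope_mono:
  assumes "1 \<le> j" "j \<le> k" "k \<le> n"
  shows "slope j \<le> slope k"
  by (rule lift_Suc_mono_le_ivl[where N = "{1..n-1}"])
     (use L_steps assms in \<open>auto simp: slope_def\<close>)

lemma coslope_mono:
  assumes "1 \<le> j" "j \<le> k" "k \<le> n"
  shows "coslope j \<le> coslope k"
proof (rule lift_Suc_mono_le_ivl[where N = "{1..n-1}"])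
  fix i assume "i \<in> {1..n-1}"
  moreover have "n - i = n + 1 - Suc i" by simp
  ultimately show "coslope i \<le> coslope (Suc i)"
    using L_steps unfolding coslope_def by (metis Suc_eq_plus1)
qed (use assms in auto)

text \<open>Slope below coslope: all slopes are at most L n / n <= 1 / (n + 1), and a slope of
  at most 1 / (n + 1) forces the remaining mass to be spread at a level at least as high.\<close>

lemma slope_le_coslope:
  assumes k: "k \<in> {1..n}"
  shows "slope k \<le> coslope k"
proof -
  have "slope k \<le> slope n" using k by (intro slope_mono) auto
  also have "\<dots> \<le> 1 / real (n + 1)" using n_pos L_last by (simp add: slope_def field_simps)
  finally have "slope k * real (n + 1) \<le> 1" by (simp add: field_simps)
  then have "slope k * real (n + 1 - k) \<le> 1 - L k"
    using k L_eq_slope[OF k] by (simp add: of_nat_diff algebra_simps)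
  moreover have "real (n + 1 - k) > 0" using k by auto
  ultimately show ?thesis unfolding coslope_def by (simp add: field_simps)
qed

definition witness :: "nat \<Rightarrow> nat \<Rightarrow> real" where
  "witness k = two_level_point (n + 1) k (slope k) (coslope k)"

lemma psi_witness:
  "j \<le> n + 1 \<Longrightarrow> psi j (witness k)
     = (if j \<le> k then real j * slope k else real k * slope k + real (j - k) * coslope k)"
  unfolding witness_def by (rule psi_two_level_point)

lemma witness_in_ordered_simplex:
  assumes k: "k \<in> {1..n}"
  shows "witness k \<in> ordered_simplex (n + 1)"
  unfolding witness_def
proof (rule two_level_point_in_ordered_simplex)
  show "0 \<le> slope k" using L_range k by (auto simp: slope_def)
  show "real k * slope k + real (n + 1 - k) * coslope k = 1"
    using L_eq_slope[OF k] L_eq_coslope[OF k] by simp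
qed (use k slope_le_coslope in auto)

lemma psi_witness_self: "j \<in> {1..n} \<Longrightarrow> psi j (witness j) = L j"
  using psi_witness[of j j] L_eq_slope by auto

text \<open>Every witness has all partial sums bounded below by the prescribed minima: for
  j <= k compare slopes, for j > k compare coslopes on the complementary coordinates.\<close>

lemma psi_witness_lower:
  assumes j: "j \<in> {1..n}" and k: "k \<in> {1..n}"
  shows "L j \<le> psi j (witness k)"
proof (cases "j \<le> k")
  case True
  have "real j * slope j \<le> real j * slope k"
    using j k True by (intro mult_left_mono slope_mono) auto
  then show ?thesis using psi_witness[of j k] j True L_eq_slope[OF j] by auto
next
  case False
  have "real (n + 1 - j) * coslope k \<le> real (n + 1 - j) * coslope j"
    using j k False by (intro mult_left_mono coslope_mono) auto
  moreover have "real (n + 1 - k) = real (n + 1 - j) + real (j - k)"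
    using False j k by (simp add: of_nat_diff)
  then have "psi j (witness k) = 1 - real (n + 1 - j) * coslope k"
    using psi_witness[of j k] j False L_eq_slope[OF k] L_eq_coslope[OF k]
    by (simp add: algebra_simps)
  ultimately show ?thesis using L_eq_coslope[OF j] by linarith
qed

end

theorem mainTheorem11:
  fixes n :: nat and L :: "nat \<Rightarrow> real"
  assumes "n \<ge> 1"
    and "\<forall>j\<in>{1..n}. 0 \<le> L j \<and> L j \<le> 1"
    and "L n \<le> real n / real (n + 1)"
    and "\<forall>j\<in>{1..n-1}. L j / real j \<le> L (j + 1) / real (j + 1)
           \<and> (1 - L j) / real (n + 1 - j) \<le> (1 - L (j + 1)) / real (n - j)"
  shows "\<exists>E. finite E \<and> E \<noteq> {} \<and> E \<subseteq> ordered_simplex (n + 1)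
           \<and> (\<forall>j\<in>{1..n}. L j = Min (psi j ` E))"
proof -
  interpret admissible_profile n L using assms by unfold_locales
  let ?E = "witness ` {1..n}"
  have "L j = Min (psi j ` ?E)" if j: "j \<in> {1..n}" for j
  proof (rule sym, rule Min_eqI)
    show "L j \<in> psi j ` ?E" using psi_witness_self[OF j] j by force
  qed (use psi_witness_lower j in auto)
  moreover have "?E \<subseteq> ordered_simplex (n + 1)" using witness_in_ordered_simplex by auto
  moreover have "?E \<noteq> {}" using assms(1) by auto
  ultimately show ?thesis by (intro exI[of _ ?E]) auto
qed

end
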